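(* Let $\mu$ be the Borel measure on $\mathbb{R}$ equal to Lebesgue measure on $\mathbb{R}\setminus[0,1)$ and, on $[0,1)$, having constant density on each interval $I_k^b=[2^{-k},2^{-k+1})$, $k\ge1$, with masses determined by $\mu(I_1)=\mu(I_1^b)=\tfrac12$ and, for $k\ge2$, $\mu(I_k)=\frac{k-1}{k}\mu(I_{k-1})$, $\mu(I_k^b)=\frac1k\mu(I_{k-1})$, where $I_k=[0,2^{-k})$. Define $b=\sum_{k=1}^\infty\alpha_kh_{I_k}$ with $\alpha_k=k^{-1/2}\mu(I_k)^{1/2}$. Then $b\in\mathrm{BMO}(\mu)$, but $$\sum_{k=1}^\infty\|\Delta_{I_k}b\|_\infty^2\,\mu(I_k)=+\infty.$$
   Context: $\mathcal{D}$ is the standard dyadic grid on $\mathbb{R}$. For $Q\in\mathcal{D}$: $Q_-,Q_+$ its left/right children, $\widehat Q$ its parent, $\langle f\rangle_Q=\frac1{\mu(Q)}\int_Qf\,d\mu$, $\Delta_Qf=\sum_{R\in\{Q_-,Q_+\}}\langle f\rangle_R\mathbf 1_R-\langle f\rangle_Q\mathbf 1_Q$, $m(Q)=\frac{\mu(Q_+)\mu(Q_-)}{\mu(Q)}$, $h_Q=\sqrt{m(Q)}\big(\frac{\mathbf 1_{Q_+}}{\mu(Q_+)}-\frac{\mathbf 1_{Q_-}}{\mu(Q_-)}\big)$. $b\in\mathrm{BMO}(\mu)$ means $\sup_{Q\in\mathcal{D}}\frac1{\mu(Q)}\int_Q|b-\langle b\rangle_{\widehat Q}|\,d\mu<\infty$.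 $\|\cdot\|_\infty$ is the $L^\infty(\mu)$ norm. *)

theory Defs
  imports "HOL-Analysis.Analysis" "HOL-Probability.Essential_Supremum"
begin

definition dcube :: "int \<Rightarrow> int \<Rightarrow> real set" where
  "dcube n j = {of_int j * 2 powr (of_int n) ..< (of_int j + 1) * 2 powr (of_int n)}"

definition dyadic :: "real set set" where
  "dyadic = {dcube n j | n j. True}"

definition lchild :: "real set \<Rightarrow> real set" where
  "lchild Q = {Inf Q ..< (Inf Q + Sup Q) / 2}"

definition rchild :: "real set \<Rightarrow> real set" where
  "rchild Q = {(Inf Q + Sup Q) / 2 ..< Sup Q}"

definition dparent :: "real set \<Rightarrow> real set" where
  "dparent Q = (let l = 2 * (Sup Q - Inf Q); j = \<lfloor>Inf Q / l\<rfloor>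
                in {of_int j * l ..< (of_int j + 1) * l})"

definition avg :: "real measure \<Rightarrow> (real \<Rightarrow> real) \<Rightarrow> real set \<Rightarrow> real" where
  "avg M f Q = (LINT x:Q|M. f x) / measure M Q"

definition mdiff :: "real measure \<Rightarrow> real set \<Rightarrow> (real \<Rightarrow> real) \<Rightarrow> real \<Rightarrow> real" where
  "mdiff M Q f x = avg M f (lchild Q) * indicator (lchild Q) x
                 + avg M f (rchild Q) * indicator (rchild Q) x
                 - avg M f Q * indicator Q x"

definition mQ :: "real measure \<Rightarrow> real set \<Rightarrow> real" where
  "mQ M Q = measure M (rchild Q) * measure M (lchild Q) / measure M Q"

definition haar :: "real measure \<Rightarrow> real set \<Rightarrow> real \<Rightarrow> real" where
  "haar M Q x = sqrt (mQ M Q) *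
     (indicator (rchild Q) x / measure M (rchild Q) - indicator (lchild Q) x / measure M (lchild Q))"

definition in_BMO :: "real measure \<Rightarrow> (real \<Rightarrow> real) \<Rightarrow> bool" where
  "in_BMO M b \<longleftrightarrow> b \<in> borel_measurable M \<and> (\<forall>Q\<in>dyadic. set_integrable M Q b) \<and>
     (SUP Q\<in>dyadic. (\<integral>\<^sup>+ x\<in>Q. ennreal \<bar>b x - avg M b (dparent Q)\<bar> \<partial>M) / emeasure M Q) < \<infinity>"

definition Linf_norm :: "real measure \<Rightarrow> (real \<Rightarrow> real) \<Rightarrow> ereal" where
  "Linf_norm M f = esssup M (\<lambda>x. ereal \<bar>f x\<bar>)"

definition Ik :: "nat \<Rightarrow> real set" where
  "Ik k = {0 ..< (1/2) ^ k}"

definition Ikb :: "nat \<Rightarrow> real set" where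
  "Ikb k = {(1/2) ^ k ..< (1/2) ^ (k - 1)}"

text \<open>Prescribed masses mu(I_k) (index k >= 1; value at 0 unused).\<close>
fun muI :: "nat \<Rightarrow> real" where
  "muI 0 = 1"
| "muI (Suc 0) = 1/2"
| "muI (Suc (Suc k)) = (real k + 1) / (real k + 2) * muI (Suc k)"

fun muIb :: "nat \<Rightarrow> real" where
  "muIb 0 = 0"
| "muIb (Suc 0) = 1/2"
| "muIb (Suc (Suc k)) = 1 / (real k + 2) * muI (Suc k)"

text \<open>Density: 1 off [0,1), constant mu(I_k^b)/|I_k^b| on I_k^b (value at the null point 0 irrelevant).\<close>
definition dens :: "real \<Rightarrow> real" where
  "dens x = (if x < 0 \<or> 1 \<le> x then 1
             else if x = 0 then 0
             else (let k = (THE k. 1 \<le> k \<and> x \<in> Ikb k) in muIb k / (1/2) ^ k))"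

definition mu :: "real measure" where
  "mu = density lborel (\<lambda>x. ennreal (dens x))"

definition alpha :: "nat \<Rightarrow> real" where
  "alpha k = sqrt (1 / real k) * sqrt (measure mu (Ik k))"

definition bfun :: "real \<Rightarrow> real" where
  "bfun x = (\<Sum>k. alpha (Suc k) * haar mu (Ik (Suc k)) x)"

end

theory Submission
  imports Defs "HOL-Real_Asymp.Real_Asymp"
begin

(* Since mu(I_k) = 1/(2k), the k-th summand of b is alpha_k h_{I_k} = 1_{I^b_{k+1}} - 1_{I_{k+1}} / k.
   It has mean zero and L^1 norm 1/(k(k+1)), and it is constant on every dyadic interval strictly
   shorter than I_k.  Hence, on a dyadic interval Q, the function b - <b>_{parent Q} is the sum of
   the summands whose I_k is not longer than the parent of Q.  If 0 is not the left endpoint of Q,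
   at most one of them is non-zero at any point of Q, and it is bounded by 1; otherwise their
   total L^1 norm is comparable to mu(Q).  So b is in BMO(mu), with constant 4.
   On the other hand Delta_{I_k} b = 1 on the set I^b_{k+1} of positive measure, so the series
   dominates sum_k mu(I_k) = sum_k 1/(2k) = infinity. *)

lemma half_power_eq_powr: "((1::real) / 2) ^ n = 2 powr (- real n)"
  by (simp add: powr_minus powr_realpow power_one_over inverse_eq_divide)

lemma dcube_iff_floor: "x \<in> dcube m J \<longleftrightarrow> \<lfloor>x / 2 powr of_int m\<rfloor> = J"
proof -
  have c: "0 < (2::real) powr of_int m" by simp
  show ?thesis unfolding dcube_def floor_eq_iff
    by (simp add: pos_le_divide_eq[OF c] pos_divide_less_eq[OF c] algebra_simps)
qed

lemma floor_dcube_coarser: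
  assumes "m \<le> m'" "x \<in> dcube m J"
  shows "\<lfloor>x / 2 powr of_int m'\<rfloor> = J div 2 ^ nat (m' - m)"
proof -
  have "(2::real) powr of_int m' = 2 powr of_int m * 2 powr of_int (m' - m)"
    by (simp add: powr_add[symmetric])
  also have "(2::real) powr of_int (m' - m) = real_of_int (2 ^ nat (m' - m))"
    using assms(1) by (simp add: powr_realpow[symmetric])
  finally have "x / 2 powr of_int m' = (x / 2 powr of_int m) / real_of_int (2 ^ nat (m' - m))"
    by simp
  also have "\<lfloor>\<dots>\<rfloor> = J div 2 ^ nat (m' - m)"
    using floor_divide_real_eq_div[of "2 ^ nat (m' - m)" "x / 2 powr of_int m"] assms(2)
    by (simp add: dcube_iff_floor)
  finally show ?thesis .
qed

lemma dcube_subset_coarser: "m \<le> m' \<Longrightarrow> dcube m J \<subseteq> dcube m' (J div 2 ^ nat (m' - m))"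
  using floor_dcube_coarser by (auto simp: dcube_iff_floor)

lemma dcube_coarser_mem_iff:
  "m \<le> m' \<Longrightarrow> x \<in> dcube m J \<Longrightarrow> y \<in> dcube m J \<Longrightarrow> x \<in> dcube m' J' \<longleftrightarrow> y \<in> dcube m' J'"
  using floor_dcube_coarser by (simp add: dcube_iff_floor)

lemma dparent_dcube: "dparent (dcube n j) = dcube (n + 1) (j div 2)"
proof -
  define c where "c = (2::real) powr of_int n"
  have c: "0 < c" unfolding c_def by simp
  have lt: "of_int j * c < (of_int j + 1) * c" using c by (simp add: algebra_simps)
  have "Inf (dcube n j) = of_int j * c" "Sup (dcube n j) = (of_int j + 1) * c"
    unfolding dcube_def c_def[symmetric] using lt by simp_all
  moreover have "\<lfloor>of_int j * c / (2 * c)\<rfloor> = j div 2"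
    using floor_divide_of_int_eq[of j 2] c by simp
  moreover have "(2::real) powr of_int (n + 1) = 2 * c" unfolding c_def by (simp add: powr_add)
  ultimately show ?thesis
    unfolding dparent_def dcube_def c_def[symmetric] Let_def by (simp add: algebra_simps)
qed

lemma emeasure_lborel_dcube: "emeasure lborel (dcube m J) = ennreal (2 powr of_int m)"
  unfolding dcube_def by (subst emeasure_lborel_Ico) (auto simp: algebra_simps)

lemma sums_reciprocal_consecutive_tail:
  "(\<lambda>i. if m \<le> i then 1 / ((real i + 1) * (real i + 2)) else 0) sums (1 / (real m + 1))"
proof -
  define h where "h i = 1 / (real (max i m) + 1)" for i
  have "(\<lambda>i. 1 / (real i + 1)) \<longlonglongrightarrow> 0" by real_asymp
  moreover have "eventually (\<lambda>i. 1 / (real i + 1) = h i) sequentially"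
    using eventually_ge_at_top[of m] by eventually_elim (simp add: h_def)
  ultimately have "h \<longlonglongrightarrow> 0" by (rule Lim_transform_eventually)
  then have "(\<lambda>i. h i - h (Suc i)) sums (h 0 - 0)" by (rule telescope_sums')
  moreover have "h i - h (Suc i) = (if m \<le> i then 1 / ((real i + 1) * (real i + 2)) else 0)" for i
    unfolding h_def by (auto simp: max_def divide_simps)
  ultimately show ?thesis by (simp add: h_def)
qed

lemma Ikb_in_unit_interval: "1 \<le> j \<Longrightarrow> x \<in> Ikb j \<Longrightarrow> 0 < x \<and> x < 1"
proof -
  assume "1 \<le> j" "x \<in> Ikb j"
  then have "(1 / 2) ^ j \<le> x" "x < (1 / 2) ^ (j - 1)" unfolding Ikb_def by auto
  moreover have "0 < ((1::real) / 2) ^ j" "((1::real) / 2) ^ (j - 1) \<le> 1"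
    by (simp_all add: power_le_one)
  ultimately show ?thesis by linarith
qed

lemma Ikb_unique:
  assumes "1 \<le> i" "1 \<le> j" "x \<in> Ikb i" "x \<in> Ikb j"
  shows "i = j"
proof -
  have False if "1 \<le> a" "a < b" "x \<in> Ikb a" "x \<in> Ikb b" for a b :: nat
  proof -
    have "((1::real) / 2) ^ (b - 1) \<le> (1 / 2) ^ a" by (rule power_decreasing) (use that in auto)
    moreover have "x < (1 / 2) ^ (b - 1)" "(1 / 2) ^ a \<le> x" using that unfolding Ikb_def by auto
    ultimately show False by linarith
  qed
  with assms show ?thesis by (metis linorder_neqE_nat)
qed

lemma Ikb_exists:
  assumes "0 < x" "x < (1 / 2) ^ k"
  obtains j where "k < j" "x \<in> Ikb j"
proof -
  obtain n where n: "((1::real) / 2) ^ n < x" using real_arch_pow_inv[OF assms(1), of "1/2"] by auto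
  define j where "j = (LEAST n. ((1::real) / 2) ^ n \<le> x)"
  have j: "((1::real) / 2) ^ j \<le> x" unfolding j_def by (rule LeastI[of _ n]) (use n in auto)
  have "k < j"
  proof (rule ccontr)
    assume "\<not> k < j"
    then have "((1::real) / 2) ^ k \<le> (1 / 2) ^ j" by (intro power_decreasing) auto
    with j assms show False by auto
  qed
  moreover have "\<not> ((1::real) / 2) ^ (j - 1) \<le> x"
  proof
    assume "((1::real) / 2) ^ (j - 1) \<le> x"
    then have "j \<le> j - 1" unfolding j_def by (rule Least_le)
    with \<open>k < j\<close> show False by auto
  qed
  ultimately show ?thesis using that j unfolding Ikb_def by auto
qed

lemma Ik_Suc_Un_Ikb_Suc: "Ik (Suc n) \<union> Ikb (Suc n) = Ik n"
  unfolding Ik_def Ikb_def diff_Suc_1 by (rule ivl_disj_un_two(3)) simp_all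

lemma Ik_Suc_Int_Ikb_Suc: "Ik (Suc n) \<inter> Ikb (Suc n) = {}"
  unfolding Ik_def Ikb_def by auto

lemma dens_Ikb: assumes "1 \<le> j" "x \<in> Ikb j" shows "dens x = muIb j / (1 / 2) ^ j"
proof -
  have "(THE k. 1 \<le> k \<and> x \<in> Ikb k) = j"
    by (rule the_equality) (use assms Ikb_unique in auto)
  with Ikb_in_unit_interval[OF assms] show ?thesis unfolding dens_def by (auto simp: Let_def)
qed

lemma dens_outside: "x < 0 \<or> 1 \<le> x \<Longrightarrow> dens x = 1"
  unfolding dens_def by auto

lemma muI_eq: "1 \<le> k \<Longrightarrow> muI k = 1 / (2 * real k)"
proof (induction k rule: nat_induct_at_least)
  case (Suc n)
  then obtain m where "n = Suc m" by (cases n) auto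
  with Suc.IH show ?case by (simp add: field_simps)
qed simp

lemma muIb_Suc: "muIb (Suc j) = muI j - muI (Suc j)"
  by (cases j) (simp_all add: field_simps)

lemma muIb_Suc_Suc: "muIb (Suc (Suc k)) = 1 / (2 * (real k + 1) * (real k + 2))"
proof -
  have "muI (Suc k) = 1 / (2 * (real k + 1))" using muI_eq[of "Suc k"] by simp
  then show ?thesis by (simp only: muIb.simps) (simp add: field_simps)
qed

lemma muIb_nonneg: "0 \<le> muIb j"
  by (cases j rule: muIb.cases) (auto simp: muI_eq)

lemma space_mu [simp]: "space mu = UNIV"
  unfolding mu_def by simp

lemma sets_mu [simp, measurable_cong]: "sets mu = sets borel"
  unfolding mu_def by simp

lemma Ik_borel [measurable]: "Ik k \<in> sets borel"
  unfolding Ik_def by simp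

lemma Ikb_borel [measurable]: "Ikb j \<in> sets borel"
  unfolding Ikb_def by simp

lemma dcube_borel [measurable]: "dcube m J \<in> sets borel"
  unfolding dcube_def by simp

lemma dens_measurable [measurable]: "dens \<in> borel_measurable borel"
proof -
  define c where "c j = muIb (Suc j) / (1 / 2) ^ Suc j" for j
  have "dens x = (if x < 0 \<or> 1 \<le> x then 1 else if x = 0 then 0
                  else \<Sum>j. c j * indicator (Ikb (Suc j)) x)" for x
  proof -
    have "dens x = (\<Sum>j. c j * indicator (Ikb (Suc j)) x)" if x: "0 < x" "x < 1"
    proof -
      obtain j where j: "0 < j" "x \<in> Ikb j" by (rule Ikb_exists[of x 0]) (use x in simp_all)
      then obtain i where i: "j = Suc i" by (cases j) auto
      have "(\<Sum>j. c j * indicator (Ikb (Suc j)) x) = (\<Sum>j\<in>{i}. c j * indicator (Ikb (Suc j)) x)"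
        by (rule suminf_finite) (use j i Ikb_unique[of _ "Suc i" x] in \<open>auto simp: indicator_def\<close>)
      then show ?thesis using dens_Ikb[of j x] j i by (simp add: c_def)
    qed
    then show ?thesis by (auto simp: dens_def)
  qed
  then have "dens = (\<lambda>x. if x < 0 \<or> 1 \<le> x then 1 else if x = 0 then 0
                        else \<Sum>j. c j * indicator (Ikb (Suc j)) x)"
    by (rule ext)
  also have "\<dots> \<in> borel_measurable borel" by measurable
  finally show ?thesis .
qed

lemma emeasure_mu: "A \<in> sets borel \<Longrightarrow> emeasure mu A = (\<integral>\<^sup>+x. ennreal (dens x) * indicator A x \<partial>lborel)"
  unfolding mu_def by (subst emeasure_density) (auto simp: mult.commute)

lemma emeasure_mu_Ikb: assumes "1 \<le> j" shows "emeasure mu (Ikb j) = muIb j"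
proof -
  have "emeasure mu (Ikb j) = (\<integral>\<^sup>+x. ennreal (muIb j / (1 / 2) ^ j) * indicator (Ikb j) x \<partial>lborel)"
    unfolding emeasure_mu[OF Ikb_borel]
    by (rule nn_integral_cong) (use dens_Ikb[OF assms] in \<open>auto simp: indicator_def\<close>)
  also have "\<dots> = ennreal (muIb j / (1 / 2) ^ j) * emeasure lborel (Ikb j)"
    by (rule nn_integral_cmult_indicator) simp
  also have "emeasure lborel (Ikb j) = ennreal ((1 / 2) ^ (j - 1) - (1 / 2) ^ j)"
    unfolding Ikb_def by (rule emeasure_lborel_Ico) (rule power_decreasing, auto)
  also have "ennreal (muIb j / (1 / 2) ^ j) * \<dots> = ennreal (muIb j / (1 / 2) ^ j * ((1 / 2) ^ (j - 1) - (1 / 2) ^ j))"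
    by (rule ennreal_mult''[symmetric]) (use muIb_nonneg[of j] in simp)
  also have "muIb j / (1 / 2) ^ j * ((1 / 2) ^ (j - 1) - (1 / 2) ^ j) = muIb j"
    using assms by (cases j) (simp_all add: field_simps)
  finally show ?thesis .
qed

lemma null_sets_mu_0: "{0} \<in> null_sets mu"
proof -
  have "\<And>x. ennreal (dens x) * indicator {0} x = 0" by (auto simp: dens_def indicator_def)
  then show ?thesis by (simp add: null_sets_def emeasure_mu)
qed

lemma AE_mu_nonzero: "AE x in mu. x \<noteq> 0"
  by (rule AE_I'[OF null_sets_mu_0]) auto

lemma Ik_eq_Un_Ikb: "Ik k = {0} \<union> (\<Union>j. Ikb (Suc (j + k)))"
proof (intro equalityI subsetI)
  fix x assume x: "x \<in> Ik k"
  show "x \<in> {0} \<union> (\<Union>j. Ikb (Suc (j + k)))"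
  proof (cases "x = 0")
    case False
    with x obtain j where "k < j" "x \<in> Ikb j" using Ikb_exists[of x k] unfolding Ik_def by auto
    then have "x \<in> Ikb (Suc ((j - Suc k) + k))" by (simp add: Suc_diff_Suc)
    then show ?thesis by blast
  qed simp
next
  fix x assume "x \<in> {0} \<union> (\<Union>j. Ikb (Suc (j + k)))"
  then consider "x = 0" | j where "x \<in> Ikb (Suc (j + k))" by blast
  then show "x \<in> Ik k"
  proof cases
    case 2
    have "((1::real) / 2) ^ (j + k) \<le> (1 / 2) ^ k" by (rule power_decreasing) auto
    moreover have "x < (1 / 2) ^ (j + k)" "0 < x" using 2 Ikb_in_unit_interval[of "Suc (j + k)" x] unfolding Ikb_def by auto
    ultimately have "x < (1 / 2) ^ k" by linarith
    with \<open>0 < x\<close> show ?thesis unfolding Ik_def by simp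
  qed (simp add: Ik_def)
qed

lemma emeasure_mu_Ik: "emeasure mu (Ik k) = muI k"
proof -
  have disj: "disjoint_family (\<lambda>j. Ikb (Suc (j + k)))"
    unfolding disjoint_family_on_def using Ikb_unique by fastforce
  have "(\<lambda>n. 1 / (2 * real (n + k))) \<longlonglongrightarrow> 0" by real_asymp
  moreover have "eventually (\<lambda>n. 1 / (2 * real (n + k)) = muI (n + k)) sequentially"
    using eventually_ge_at_top[of 1] by eventually_elim (simp add: muI_eq)
  ultimately have "(\<lambda>n. muI (n + k)) \<longlonglongrightarrow> 0" by (rule Lim_transform_eventually)
  from telescope_sums'[OF this] have sums: "(\<lambda>j. muIb (Suc (j + k))) sums muI k"
    by (simp add: muIb_Suc)
  have "emeasure mu (Ik k) = emeasure mu {0} + emeasure mu (\<Union>j. Ikb (Suc (j + k)))"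
    unfolding Ik_eq_Un_Ikb by (rule plus_emeasure[symmetric]) (use Ikb_in_unit_interval in auto)
  also have "\<dots> = (\<Sum>j. emeasure mu (Ikb (Suc (j + k))))"
  proof -
    have "range (\<lambda>j. Ikb (Suc (j + k))) \<subseteq> sets mu" by auto
    from suminf_emeasure[OF this disj] show ?thesis by (simp add: null_setsD1[OF null_sets_mu_0])
  qed
  also have "\<dots> = (\<Sum>j. ennreal (muIb (Suc (j + k))))"
    by (simp add: emeasure_mu_Ikb)
  also have "\<dots> = ennreal (muI k)"
    using suminf_ennreal2[OF muIb_nonneg sums_summable[OF sums]] sums_unique[OF sums] by simp
  finally show ?thesis .
qed

lemma measure_mu_Ik_Suc: "measure mu (Ik (Suc k)) = 1 / (2 * (real k + 1))"
  using emeasure_mu_Ik[of "Suc k"] muI_eq[of "Suc k"] by (simp add: measure_def)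

lemma measure_mu_Ik_Suc_Suc: "measure mu (Ik (Suc (Suc k))) = 1 / (2 * (real k + 2))"
  using measure_mu_Ik_Suc[of "Suc k"] by simp

lemma measure_mu_Ikb_Suc_Suc: "measure mu (Ikb (Suc (Suc k))) = 1 / (2 * (real k + 1) * (real k + 2))"
  using emeasure_mu_Ikb[of "Suc (Suc k)"] muIb_Suc_Suc[of k] by (simp add: measure_def)

lemma integrable_mu_Ik: "integrable mu (indicator (Ik k) :: real \<Rightarrow> real)"
  by (simp add: emeasure_mu_Ik)

lemma integrable_mu_Ikb: "1 \<le> j \<Longrightarrow> integrable mu (indicator (Ikb j) :: real \<Rightarrow> real)"
  by (simp add: emeasure_mu_Ikb)

lemma two_mult_Suc_le_power: "(k + 1) * (k + 2) \<le> (2::nat) ^ (k + 2)"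
proof (induction k)
  case (Suc k)
  have "k + 1 < 2 ^ (k + 1)" using less_exp[of "k + 1"] by simp
  with Suc show ?case by (simp add: algebra_simps)
qed simp

lemma dens_ge_half: assumes "x \<noteq> 0" shows "1 / 2 \<le> dens x"
proof (cases "x < 0 \<or> 1 \<le> x")
  case False
  with assms have "0 < x" "x < (1 / 2) ^ 0" by auto
  then obtain j where j: "0 < j" "x \<in> Ikb j" by (rule Ikb_exists)
  show ?thesis
  proof (cases "j = 1")
    case True
    with dens_Ikb[of j x] j show ?thesis by simp
  next
    case False
    define k where "k = j - 2"
    have k: "j = Suc (Suc k)" using j False unfolding k_def by arith
    have "real ((k + 1) * (k + 2)) \<le> real (2 ^ (k + 2))"
      using two_mult_Suc_le_power[of k] by (simp only: of_nat_le_iff)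
    then have "(real k + 1) * (real k + 2) \<le> 2 ^ (k + 2)"
      by (simp only: of_nat_mult of_nat_add of_nat_1 of_nat_numeral of_nat_power)
    then have "1 / 2 \<le> 2 ^ (k + 2) / (2 * ((real k + 1) * (real k + 2)))"
      by (simp add: le_divide_eq)
    also have "\<dots> = 2 ^ (k + 2) / (2 * (real k + 1) * (real k + 2))"
      by (simp only: mult.assoc)
    also have "\<dots> = dens x"
      using dens_Ikb[of j x] j unfolding k muIb_Suc_Suc by (simp add: power_one_over divide_simps)
    finally show ?thesis .
  qed
qed (simp add: dens_outside)

lemma emeasure_mu_ge_lborel:
  assumes "A \<in> sets borel" shows "ennreal (1 / 2) * emeasure lborel A \<le> emeasure mu A"
proof -
  have "ennreal (1 / 2) * emeasure lborel A = (\<integral>\<^sup>+x. ennreal (1 / 2) * indicator A x \<partial>lborel)"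
    using assms by (simp add: nn_integral_cmult_indicator)
  also have "\<dots> \<le> (\<integral>\<^sup>+x. ennreal (dens x) * indicator A x \<partial>lborel)"
  proof (rule nn_integral_mono_AE)
    show "AE x in lborel. ennreal (1 / 2) * indicator A x \<le> ennreal (dens x) * indicator A x"
      using AE_lborel_singleton[of 0]
      by eventually_elim (intro mult_right_mono ennreal_leI dens_ge_half, auto)
  qed
  also have "\<dots> = emeasure mu A" using emeasure_mu[OF assms] by simp
  finally show ?thesis .
qed

lemma emeasure_mu_le_lborel:
  assumes "A \<in> sets borel" shows "emeasure mu A \<le> 1 + emeasure lborel A"
proof -
  have "emeasure mu A \<le> emeasure mu (Ik 0 \<union> (A - Ik 0))"
    by (rule emeasure_mono) (use assms in auto)
  also have "\<dots> \<le> emeasure mu (Ik 0) + emeasure mu (A - Ik 0)"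
    by (rule emeasure_subadditive) (use assms in auto)
  also have "emeasure mu (Ik 0) = 1" by (simp add: emeasure_mu_Ik)
  also have "emeasure mu (A - Ik 0) = emeasure lborel (A - Ik 0)"
  proof -
    have "emeasure mu (A - Ik 0) = (\<integral>\<^sup>+x. ennreal (dens x) * indicator (A - Ik 0) x \<partial>lborel)"
      by (rule emeasure_mu) (use assms in auto)
    also have "\<dots> = (\<integral>\<^sup>+x. indicator (A - Ik 0) x \<partial>lborel)"
      by (rule nn_integral_cong) (auto simp: indicator_def Ik_def dens_outside)
    finally show ?thesis using assms by simp
  qed
  also have "emeasure lborel (A - Ik 0) \<le> emeasure lborel A"
    by (rule emeasure_mono) (use assms in auto)
  finally show ?thesis by (simp add: add_left_mono)
qed

lemma emeasure_mu_dcube_pos: "0 < emeasure mu (dcube m J)"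
proof -
  have "0 < ennreal (1 / 2) * ennreal (2 powr of_int m)"
    by (auto simp: ennreal_zero_less_mult_iff ennreal_inverse_positive)
  also have "\<dots> \<le> emeasure mu (dcube m J)"
    using emeasure_mu_ge_lborel[of "dcube m J"] by (simp add: emeasure_lborel_dcube)
  finally show ?thesis .
qed

lemma emeasure_mu_dcube_finite: "emeasure mu (dcube m J) < \<infinity>"
proof -
  have "emeasure mu (dcube m J) \<le> 1 + ennreal (2 powr of_int m)"
    using emeasure_mu_le_lborel[of "dcube m J"] by (simp add: emeasure_lborel_dcube)
  also have "\<dots> < \<infinity>" by (simp add: less_top)
  finally show ?thesis .
qed

lemma measure_mu_dcube_pos: "0 < measure mu (dcube m J)"
  using emeasure_mu_dcube_pos emeasure_mu_dcube_finite
  by (simp add: measure_def enn2real_positive_iff)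

lemma Ik_eq_dcube: "Ik n = dcube (- int n) 0"
  unfolding Ik_def dcube_def by (simp add: half_power_eq_powr)

lemma Ikb_Suc_eq_dcube: "Ikb (Suc n) = dcube (- int (Suc n)) 1"
  using half_power_eq_powr[of "Suc n"] unfolding Ikb_def dcube_def by (simp add: mult.commute)

lemma Inf_Ik: "Inf (Ik n) = 0"
  unfolding Ik_def by (rule cInf_atLeastLessThan) simp

lemma Sup_Ik: "Sup (Ik n) = (1 / 2) ^ n"
  unfolding Ik_def by (rule cSup_atLeastLessThan) simp

lemma lchild_Ik: "lchild (Ik n) = Ik (Suc n)"
  unfolding lchild_def Inf_Ik Sup_Ik by (simp add: Ik_def)

lemma rchild_Ik: "rchild (Ik n) = Ikb (Suc n)"
  unfolding rchild_def Inf_Ik Sup_Ik by (simp add: Ikb_def)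

definition bterm :: "nat \<Rightarrow> real \<Rightarrow> real" where
  "bterm k x = indicator (Ikb (Suc (Suc k))) x - indicator (Ik (Suc (Suc k))) x / (real k + 1)"

lemma alpha_haar_eq_bterm: "alpha (Suc k) * haar mu (Ik (Suc k)) x = bterm k x"
proof -
  define c where "c = 1 / (2 * (real k + 1) * (real k + 2))"
  have Ib2: "measure mu (Ikb (Suc (Suc k))) = c"
    unfolding c_def by (rule measure_mu_Ikb_Suc_Suc)
  have mQ: "mQ mu (Ik (Suc k)) = 1 / (2 * (real k + 2)^2)"
    unfolding mQ_def lchild_Ik rchild_Ik measure_mu_Ik_Suc measure_mu_Ik_Suc_Suc Ib2 c_def
    by (simp add: divide_simps power2_eq_square)
  have "alpha (Suc k) * sqrt (mQ mu (Ik (Suc k)))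
      = sqrt (1 / (real k + 1)) * sqrt (1 / (2 * (real k + 1))) * sqrt (1 / (2 * (real k + 2)^2))"
    unfolding alpha_def mQ measure_mu_Ik_Suc by (simp add: algebra_simps)
  also have "\<dots> = sqrt (1 / (real k + 1) * (1 / (2 * (real k + 1))) * (1 / (2 * (real k + 2)^2)))"
    by (simp only: real_sqrt_mult)
  also have "1 / (real k + 1) * (1 / (2 * (real k + 1))) * (1 / (2 * (real k + 2)^2)) = c^2"
    unfolding c_def by (simp add: field_simps power2_eq_square)
  finally have coeff: "alpha (Suc k) * sqrt (mQ mu (Ik (Suc k))) = c"
    unfolding c_def by simp
  then have "alpha (Suc k) * haar mu (Ik (Suc k)) x
      = c * (indicator (Ikb (Suc (Suc k))) x / c - indicator (Ik (Suc (Suc k))) x / (1 / (2 * (real k + 2))))"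
    unfolding haar_def lchild_Ik rchild_Ik Ib2 measure_mu_Ik_Suc_Suc by (simp only: mult.assoc[symmetric] coeff)
  also have "\<dots> = bterm k x"
    unfolding bterm_def c_def by (simp add: divide_simps) (simp add: algebra_simps)
  finally show ?thesis .
qed

lemma bfun_eq_suminf_bterm: "bfun x = (\<Sum>k. bterm k x)"
  unfolding bfun_def alpha_haar_eq_bterm ..

lemma bterm_measurable [measurable]: "bterm k \<in> borel_measurable borel"
  unfolding bterm_def by measurable

lemma bterm_eq_0_outside: "x \<notin> Ik (Suc k) \<Longrightarrow> bterm k x = 0"
  unfolding bterm_def using Ik_Suc_Un_Ikb_Suc[of "Suc k"] by (auto simp: indicator_def)

lemma abs_bterm_le_1: "\<bar>bterm k x\<bar> \<le> 1"
  unfolding bterm_def by (auto simp: indicator_def field_simps)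

lemma abs_bterm:
  "\<bar>bterm k x\<bar> = indicator (Ikb (Suc (Suc k))) x + indicator (Ik (Suc (Suc k))) x / (real k + 1)"
  unfolding bterm_def Ik_def Ikb_def by (auto simp: indicator_def)

lemma integrable_bterm: "integrable mu (bterm k)"
  unfolding bterm_def by (intro Bochner_Integration.integrable_diff integrable_divide_zero integrable_mu_Ik integrable_mu_Ikb) simp

lemma integral_bterm: "(LINT x|mu. bterm k x) = 0"
proof -
  have "(LINT x|mu. bterm k x) = measure mu (Ikb (Suc (Suc k))) - measure mu (Ik (Suc (Suc k))) / (real k + 1)"
    unfolding bterm_def using integrable_mu_Ik integrable_mu_Ikb[of "Suc (Suc k)"]
    by (simp add: emeasure_mu_Ik emeasure_mu_Ikb)
  also have "\<dots> = 0"
    by (simp add: measure_mu_Ik_Suc_Suc measure_mu_Ikb_Suc_Suc divide_simps) (simp add: algebra_simps)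
  finally show ?thesis .
qed

lemma integral_abs_bterm: "(LINT x|mu. \<bar>bterm k x\<bar>) = 1 / ((real k + 1) * (real k + 2))"
proof -
  have "(LINT x|mu. \<bar>bterm k x\<bar>) = measure mu (Ikb (Suc (Suc k))) + measure mu (Ik (Suc (Suc k))) / (real k + 1)"
    unfolding abs_bterm using integrable_mu_Ik integrable_mu_Ikb[of "Suc (Suc k)"]
    by (simp add: emeasure_mu_Ik emeasure_mu_Ikb)
  also have "\<dots> = 1 / ((real k + 1) * (real k + 2))"
    by (simp add: measure_mu_Ik_Suc_Suc measure_mu_Ikb_Suc_Suc divide_simps) (simp add: algebra_simps)
  finally show ?thesis .
qed

lemma nn_integral_abs_bterm: "(\<integral>\<^sup>+x. ennreal \<bar>bterm k x\<bar> \<partial>mu) = ennreal (1 / ((real k + 1) * (real k + 2)))"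
  using nn_integral_eq_integral[of mu "\<lambda>x. \<bar>bterm k x\<bar>"] integrable_bterm[of k]
  by (simp add: integral_abs_bterm)

lemma finite_bterm_nonzero: assumes "x \<noteq> 0" shows "finite {k. bterm k x \<noteq> 0}"
proof (cases "x < 0")
  case True
  then have "bterm k x = 0" for k by (intro bterm_eq_0_outside) (simp add: Ik_def)
  then show ?thesis by simp
next
  case False
  with assms obtain n where n: "((1::real) / 2) ^ n < x" using real_arch_pow_inv[of x "1/2"] by auto
  have "{k. bterm k x \<noteq> 0} \<subseteq> {..<n}"
  proof
    fix k assume "k \<in> {k. bterm k x \<noteq> 0}"
    then have "x < (1 / 2) ^ Suc k" using bterm_eq_0_outside by (force simp: Ik_def)
    with n have "((1::real) / 2) ^ n < (1 / 2) ^ Suc k" by linarith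
    then have "Suc k < n" by (subst (asm) power_strict_decreasing_iff) simp_all
    then show "k \<in> {..<n}" by simp
  qed
  then show ?thesis by (rule finite_subset) simp
qed

lemma summable_bterm_dominated:
  assumes "x \<noteq> 0" "\<And>k. bterm k x = 0 \<Longrightarrow> f k = 0" shows "summable f"
  by (rule summable_finite[OF finite_bterm_nonzero[OF assms(1)]]) (use assms(2) in auto)

lemma integrable_bfun: "integrable mu bfun"
proof -
  have "integrable mu (\<lambda>x. \<Sum>k. bterm k x)"
  proof (rule integrable_suminf)
    show "AE x in mu. summable (\<lambda>k. norm (bterm k x))"
      using AE_mu_nonzero by eventually_elim (rule summable_bterm_dominated, auto)
    show "summable (\<lambda>k. LINT x|mu. norm (bterm k x))"
      using sums_summable[OF sums_reciprocal_consecutive_tail[of 0]] by (simp add: integral_abs_bterm)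
  qed (rule integrable_bterm)
  then show ?thesis unfolding bfun_eq_suminf_bterm[abs_def] .
qed

lemma bterm_constant_on_fine_dcube:
  assumes "m \<le> - (int k + 2)" "x \<in> dcube m J" "y \<in> dcube m J"
  shows "bterm k x = bterm k y"
proof -
  have "m \<le> - int (Suc (Suc k))" using assms(1) by simp
  from dcube_coarser_mem_iff[OF this assms(2,3)]
  have "x \<in> Ik (Suc (Suc k)) \<longleftrightarrow> y \<in> Ik (Suc (Suc k))"
    and "x \<in> Ikb (Suc (Suc k)) \<longleftrightarrow> y \<in> Ikb (Suc (Suc k))"
    unfolding Ik_eq_dcube Ikb_Suc_eq_dcube by blast+
  then show ?thesis unfolding bterm_def indicator_def by simp
qed

lemma indicator_dcube_mult_bterm_coarse:
  assumes "- (int k + 1) \<le> m"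
  shows "indicator (dcube m J) x * bterm k x = (if J = 0 then bterm k x else 0)"
proof (cases "x \<in> Ik (Suc k)")
  case True
  have "Ik (Suc k) \<subseteq> dcube m 0"
    using dcube_subset_coarser[of "- int (Suc k)" m 0] assms unfolding Ik_eq_dcube by simp
  with True have "x \<in> dcube m J \<longleftrightarrow> J = 0" by (auto simp: dcube_iff_floor)
  then show ?thesis by (auto simp: indicator_def)
qed (simp add: bterm_eq_0_outside)

lemma integral_indicator_dcube_mult_bterm:
  assumes "x \<in> dcube m J"
  shows "(LINT y|mu. indicator (dcube m J) y * bterm k y)
           = (if - (int k + 1) \<le> m then 0 else measure mu (dcube m J) * bterm k x)"
proof (cases "- (int k + 1) \<le> m")
  case True
  then show ?thesis by (cases "J = 0") (simp_all add: indicator_dcube_mult_bterm_coarse integral_bterm)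
next
  case False
  have "bterm k y = bterm k x" if "y \<in> dcube m J" for y
    using bterm_constant_on_fine_dcube[OF _ that assms] False by simp
  then have "(\<lambda>y. indicator (dcube m J) y * bterm k y) = (\<lambda>y. indicator (dcube m J) y * bterm k x)"
    by (auto simp: indicator_def)
  with False show ?thesis by simp
qed

lemma set_integral_bfun:
  assumes "A \<in> sets borel"
  shows "(LINT y:A|mu. bfun y) = (\<Sum>k. LINT y|mu. indicator A y * bterm k y)"
proof -
  have integrable: "integrable mu (\<lambda>y. indicator A y * bterm k y)" for k
    using integrable_mult_indicator[OF _ integrable_bterm] assms by simp
  have "(LINT y|mu. norm (indicator A y * bterm k y)) \<le> (LINT y|mu. \<bar>bterm k y\<bar>)" for k
    by (rule integral_mono) (use integrable integrable_bterm in \<open>auto simp: indicator_def\<close>)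
  then have "summable (\<lambda>k. LINT y|mu. norm (indicator A y * bterm k y))"
    by (intro summable_comparison_test'[OF sums_summable[OF sums_reciprocal_consecutive_tail[of 0]]])
       (simp add: integral_abs_bterm)
  moreover have "AE y in mu. summable (\<lambda>k. norm (indicator A y * bterm k y))"
    using AE_mu_nonzero by eventually_elim (rule summable_bterm_dominated, auto)
  ultimately have "(LINT y|mu. (\<Sum>k. indicator A y * bterm k y)) = (\<Sum>k. LINT y|mu. indicator A y * bterm k y)"
    by (intro integral_suminf integrable)
  moreover have "indicator A y *\<^sub>R bfun y = (\<Sum>k. indicator A y * bterm k y)" for y
    unfolding bfun_eq_suminf_bterm by (cases "y \<in> A") auto
  ultimately show ?thesis unfolding set_lebesgue_integral_def by simp
qed

lemma bfun_minus_avg_dcube: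
  assumes "x \<in> dcube m J" "x \<noteq> 0"
  shows "bfun x - avg mu bfun (dcube m J) = (\<Sum>k. if - (int k + 1) \<le> m then bterm k x else 0)"
proof -
  define g where "g k = (if - (int k + 1) \<le> m then 0 else bterm k x)" for k
  have "summable g" by (rule summable_bterm_dominated[OF assms(2)]) (simp add: g_def)
  have "summable (\<lambda>k. bterm k x)" by (rule summable_bterm_dominated[OF assms(2)])
  have "avg mu bfun (dcube m J)
      = (\<Sum>k. if - (int k + 1) \<le> m then 0 else measure mu (dcube m J) * bterm k x) / measure mu (dcube m J)"
    unfolding avg_def set_integral_bfun[OF dcube_borel] integral_indicator_dcube_mult_bterm[OF assms(1)] ..
  also have "(\<lambda>k. if - (int k + 1) \<le> m then 0 else measure mu (dcube m J) * bterm k x)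
      = (\<lambda>k. measure mu (dcube m J) * g k)"
    by (auto simp: g_def)
  also have "(\<Sum>k. measure mu (dcube m J) * g k) / measure mu (dcube m J) = suminf g"
    using suminf_mult[OF \<open>summable g\<close>] measure_mu_dcube_pos[of m J] by simp
  finally have "bfun x - avg mu bfun (dcube m J) = (\<Sum>k. bterm k x) - suminf g"
    by (simp only: bfun_eq_suminf_bterm[of x])
  also have "\<dots> = (\<Sum>k. bterm k x - g k)"
    by (rule suminf_diff) fact+
  also have "(\<lambda>k. bterm k x - g k) = (\<lambda>k. if - (int k + 1) \<le> m then bterm k x else 0)"
    by (auto simp: g_def)
  finally show ?thesis .
qed

lemma abs_bfun_minus_avg_dcube_le:
  assumes "x \<in> dcube m J" "x \<noteq> 0"
  shows "ennreal \<bar>bfun x - avg mu bfun (dcube m J)\<bar>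
           \<le> (\<Sum>k. ennreal (if - (int k + 1) \<le> m then \<bar>bterm k x\<bar> else 0))"
proof -
  define u where "u k = (if - (int k + 1) \<le> m then bterm k x else 0)" for k
  have eq: "bfun x - avg mu bfun (dcube m J) = suminf u"
    unfolding u_def by (rule bfun_minus_avg_dcube[OF assms])
  have abs_u: "\<bar>u k\<bar> = (if - (int k + 1) \<le> m then \<bar>bterm k x\<bar> else 0)" for k
    unfolding u_def by auto
  have "summable (\<lambda>k. \<bar>u k\<bar>)" by (rule summable_bterm_dominated[OF assms(2)]) (simp add: u_def)
  then have "ennreal \<bar>suminf u\<bar> \<le> ennreal (\<Sum>k. \<bar>u k\<bar>)"
    by (intro ennreal_leI summable_rabs)
  also have "\<dots> = (\<Sum>k. ennreal \<bar>u k\<bar>)"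
    by (rule suminf_ennreal2[symmetric]) (use \<open>summable (\<lambda>k. \<bar>u k\<bar>)\<close> in auto)
  finally show ?thesis
    unfolding eq abs_u .
qed

lemma nn_integral_tail_abs_bterm:
  "(\<integral>\<^sup>+x. (\<Sum>k. ennreal (if n \<le> k then \<bar>bterm k x\<bar> else 0)) \<partial>mu) = ennreal (1 / (real n + 1))"
proof -
  have "(\<integral>\<^sup>+x. (\<Sum>k. ennreal (if n \<le> k then \<bar>bterm k x\<bar> else 0)) \<partial>mu)
      = (\<Sum>k. \<integral>\<^sup>+x. ennreal (if n \<le> k then \<bar>bterm k x\<bar> else 0) \<partial>mu)"
    by (rule nn_integral_suminf) measurable
  also have "\<dots> = (\<Sum>k. ennreal (if n \<le> k then 1 / ((real k + 1) * (real k + 2)) else 0))"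
    by (intro arg_cong[where f = suminf] ext) (simp add: nn_integral_abs_bterm)
  also have "\<dots> = ennreal (1 / (real n + 1))"
    using suminf_ennreal2[OF _ sums_summable[OF sums_reciprocal_consecutive_tail]]
      sums_unique[OF sums_reciprocal_consecutive_tail]
    by simp
  finally show ?thesis .
qed

lemma tail_bound_le_emeasure_dcube_0:
  "ennreal (1 / (real (nat (- n - 2)) + 1)) \<le> 4 * emeasure mu (dcube n 0)"
proof (cases "0 \<le> n")
  case True
  have "(1::real) \<le> 2 powr of_int n" using True by (intro ge_one_powr_ge_zero) auto
  then have "Ik 0 \<subseteq> dcube n 0" unfolding Ik_def dcube_def by auto
  have "ennreal (1 / (real (nat (- n - 2)) + 1)) \<le> 1"
    by (simp add: divide_le_eq_1)
  also have "1 \<le> emeasure mu (dcube n 0)"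
    using emeasure_mono[OF \<open>Ik 0 \<subseteq> dcube n 0\<close>, of mu] emeasure_mu_Ik[of 0] by simp
  also have "\<dots> \<le> 4 * emeasure mu (dcube n 0)"
    using mult_right_mono[of 1 4 "emeasure mu (dcube n 0)"] by simp
  finally show ?thesis .
next
  case False
  define N where "N = nat (- n)"
  have N: "1 \<le> N" "n = - int N" unfolding N_def using False by auto
  have measure_Q: "emeasure mu (dcube n 0) = ennreal (1 / (2 * real N))"
    using emeasure_mu_Ik[of N] muI_eq[OF N(1)] unfolding Ik_eq_dcube N(2) by simp
  have "nat (- n - 2) = N - 2" unfolding N(2) by simp
  moreover have "1 / (real (N - 2) + 1) \<le> 4 * (1 / (2 * real N))"
    using N(1) by (cases "N \<le> 2") (auto simp: divide_simps)
  ultimately have "ennreal (1 / (real (nat (- n - 2)) + 1)) \<le> ennreal (4 * (1 / (2 * real N)))"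
    by (simp add: ennreal_leI)
  also have "\<dots> = 4 * emeasure mu (dcube n 0)"
    using measure_Q by (subst ennreal_mult) simp_all
  finally show ?thesis .
qed

lemma sum_abs_bterm_coarse_le_1:
  assumes "j \<noteq> 0" "x \<in> dcube n j"
  shows "(\<Sum>k. ennreal (if - (int k + 1) \<le> n + 1 then \<bar>bterm k x\<bar> else 0)) \<le> 1"
proof -
  define k0 where "k0 = nat (- n - 2)"
  have vanish: "ennreal (if - (int k + 1) \<le> n + 1 then \<bar>bterm k x\<bar> else 0) = 0" if "k \<noteq> k0" for k
  proof (cases "- (int k + 1) \<le> n")
    case True
    with indicator_dcube_mult_bterm_coarse[OF this, of j x] assms show ?thesis by simp
  next
    case False
    with that show ?thesis unfolding k0_def by auto
  qed
  have "(\<Sum>k. ennreal (if - (int k + 1) \<le> n + 1 then \<bar>bterm k x\<bar> else 0))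
      = (\<Sum>k\<in>{k0}. ennreal (if - (int k + 1) \<le> n + 1 then \<bar>bterm k x\<bar> else 0))"
    by (rule suminf_finite) (use vanish in auto)
  also have "\<dots> \<le> 1" using abs_bterm_le_1[of k0 x] by (simp add: ennreal_leI)
  finally show ?thesis .
qed

lemma nn_integral_dcube_coarse_abs_bterm_le:
  "(\<integral>\<^sup>+x\<in>dcube n j. (\<Sum>k. ennreal (if - (int k + 1) \<le> n + 1 then \<bar>bterm k x\<bar> else 0)) \<partial>mu)
     \<le> 4 * emeasure mu (dcube n j)"
proof -
  define F where "F = (\<lambda>x. \<Sum>k. ennreal (if - (int k + 1) \<le> n + 1 then \<bar>bterm k x\<bar> else 0))"
  have "(\<integral>\<^sup>+x. F x * indicator (dcube n j) x \<partial>mu) \<le> 4 * emeasure mu (dcube n j)"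
  proof (cases "j = 0")
    case True
    have F_tail: "F x = (\<Sum>k. ennreal (if nat (- n - 2) \<le> k then \<bar>bterm k x\<bar> else 0))" for x
      unfolding F_def by (intro arg_cong[where f = suminf] ext) auto
    have "(\<integral>\<^sup>+x. F x * indicator (dcube n j) x \<partial>mu) \<le> (\<integral>\<^sup>+x. F x \<partial>mu)"
      by (rule nn_integral_mono) (simp add: indicator_def)
    also have "\<dots> = ennreal (1 / (real (nat (- n - 2)) + 1))"
      unfolding F_tail by (rule nn_integral_tail_abs_bterm)
    also have "\<dots> \<le> 4 * emeasure mu (dcube n j)"
      unfolding True by (rule tail_bound_le_emeasure_dcube_0)
    finally show ?thesis .
  next
    case False
    have "(\<integral>\<^sup>+x. F x * indicator (dcube n j) x \<partial>mu) \<le> (\<integral>\<^sup>+x. indicator (dcube n j) x \<partial>mu)"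
    proof (rule nn_integral_mono)
      fix x
      show "F x * indicator (dcube n j) x \<le> indicator (dcube n j) x"
      proof (cases "x \<in> dcube n j")
        case True
        then have "F x \<le> 1" unfolding F_def by (rule sum_abs_bterm_coarse_le_1[OF False])
        with True show ?thesis by simp
      qed simp
    qed
    also have "\<dots> \<le> 4 * emeasure mu (dcube n j)"
      using mult_right_mono[of 1 4 "emeasure mu (dcube n j)"] by simp
    finally show ?thesis .
  qed
  then show ?thesis unfolding F_def .
qed

lemma nn_integral_bfun_oscillation_le:
  "(\<integral>\<^sup>+x\<in>dcube n j. ennreal \<bar>bfun x - avg mu bfun (dparent (dcube n j))\<bar> \<partial>mu) \<le> 4 * emeasure mu (dcube n j)"
proof -
  have "AE x in mu. ennreal \<bar>bfun x - avg mu bfun (dparent (dcube n j))\<bar> * indicator (dcube n j) x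
      \<le> (\<Sum>k. ennreal (if - (int k + 1) \<le> n + 1 then \<bar>bterm k x\<bar> else 0)) * indicator (dcube n j) x"
    using AE_mu_nonzero
  proof eventually_elim
    case (elim x)
    show ?case
    proof (cases "x \<in> dcube n j")
      case True
      then have "x \<in> dcube (n + 1) (j div 2)" using dcube_subset_coarser[of n "n + 1" j] by auto
      from abs_bfun_minus_avg_dcube_le[OF this elim] True show ?thesis
        unfolding dparent_dcube by simp
    qed simp
  qed
  then have "(\<integral>\<^sup>+x\<in>dcube n j. ennreal \<bar>bfun x - avg mu bfun (dparent (dcube n j))\<bar> \<partial>mu)
      \<le> (\<integral>\<^sup>+x\<in>dcube n j. (\<Sum>k. ennreal (if - (int k + 1) \<le> n + 1 then \<bar>bterm k x\<bar> else 0)) \<partial>mu)"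
    by (rule nn_integral_mono_AE)
  also have "\<dots> \<le> 4 * emeasure mu (dcube n j)"
    by (rule nn_integral_dcube_coarse_abs_bterm_le)
  finally show ?thesis .
qed

lemma in_BMO_bfun: "in_BMO mu bfun"
  unfolding in_BMO_def
proof (intro conjI ballI)
  show "bfun \<in> borel_measurable mu"
    using borel_measurable_integrable[OF integrable_bfun] .
  fix Q assume "Q \<in> dyadic"
  then obtain n j where Q: "Q = dcube n j" unfolding dyadic_def by auto
  show "set_integrable mu Q bfun"
    unfolding set_integrable_def Q by (rule integrable_mult_indicator[OF _ integrable_bfun]) simp
next
  have "(\<integral>\<^sup>+ x\<in>Q. ennreal \<bar>bfun x - avg mu bfun (dparent Q)\<bar> \<partial>mu) / emeasure mu Q \<le> 4"
    if dyadic: "Q \<in> dyadic" for Q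
  proof -
    obtain n j where Q: "Q = dcube n j" using dyadic unfolding dyadic_def by auto
    show ?thesis
      unfolding Q using nn_integral_bfun_oscillation_le[of n j] emeasure_mu_dcube_pos[of n j]
      by (intro divide_le_posI_ennreal) (simp_all add: mult.commute)
  qed
  then have "(SUP Q\<in>dyadic. (\<integral>\<^sup>+ x\<in>Q. ennreal \<bar>bfun x - avg mu bfun (dparent Q)\<bar> \<partial>mu) / emeasure mu Q) \<le> 4"
    by (rule SUP_least)
  also have "\<dots> < \<infinity>" by simp
  finally show "(SUP Q\<in>dyadic. (\<integral>\<^sup>+ x\<in>Q. ennreal \<bar>bfun x - avg mu bfun (dparent Q)\<bar> \<partial>mu) / emeasure mu Q) < \<infinity>" .
qed

lemma mdiff_Ik_bfun_on_Ikb: assumes "x \<in> Ikb (Suc (Suc k))" shows "mdiff mu (Ik (Suc k)) bfun x = 1"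
proof -
  have "x \<noteq> 0" using Ikb_in_unit_interval[OF _ assms] by simp
  have x_Ik: "x \<in> Ik (Suc k)" "x \<notin> Ik (Suc (Suc k))"
    using assms Ik_Suc_Un_Ikb_Suc[of "Suc k"] Ik_Suc_Int_Ikb_Suc[of "Suc k"] by auto
  have bterm_x: "bterm i x = (if i = k then 1 else 0)" if "k \<le> i" for i
  proof (cases "i = k")
    case True
    with assms x_Ik show ?thesis by (simp add: bterm_def)
  next
    case False
    with that have "((1::real) / 2) ^ Suc i \<le> (1 / 2) ^ Suc (Suc k)"
      by (intro power_decreasing) auto
    then have "Ik (Suc i) \<subseteq> Ik (Suc (Suc k))"
      unfolding Ik_def by auto
    with x_Ik False show ?thesis by (auto intro: bterm_eq_0_outside)
  qed
  have "bfun x - avg mu bfun (Ikb (Suc (Suc k)))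
      = (\<Sum>i. if - (int i + 1) \<le> - int (Suc (Suc k)) then bterm i x else 0)"
    using assms \<open>x \<noteq> 0\<close> unfolding Ikb_Suc_eq_dcube by (rule bfun_minus_avg_dcube)
  also have "(\<lambda>i. if - (int i + 1) \<le> - int (Suc (Suc k)) then bterm i x else 0) = (\<lambda>i. 0)"
    using bterm_x by fastforce
  finally have avg_right: "avg mu bfun (Ikb (Suc (Suc k))) = bfun x" by simp
  have "bfun x - avg mu bfun (Ik (Suc k)) = (\<Sum>i. if - (int i + 1) \<le> - int (Suc k) then bterm i x else 0)"
    using x_Ik(1) \<open>x \<noteq> 0\<close> unfolding Ik_eq_dcube by (rule bfun_minus_avg_dcube)
  also have "(\<lambda>i. if - (int i + 1) \<le> - int (Suc k) then bterm i x else 0) = (\<lambda>i. if i = k then 1 else 0)"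
    using bterm_x by fastforce
  also have "(\<Sum>i. if i = k then (1::real) else 0) = 1"
    using suminf_finite[of "{k}" "\<lambda>i. if i = k then (1::real) else 0"] by simp
  finally have "avg mu bfun (Ik (Suc k)) = bfun x - 1" by simp
  with avg_right assms x_Ik show ?thesis
    unfolding mdiff_def lchild_Ik rchild_Ik by simp
qed

lemma Linf_norm_mdiff_Ik_bfun_ge_1: "1 \<le> Linf_norm mu (mdiff mu (Ik (Suc k)) bfun)"
proof (rule ccontr)
  define f where "f x = ereal \<bar>mdiff mu (Ik (Suc k)) bfun x\<bar>" for x
  assume "\<not> 1 \<le> Linf_norm mu (mdiff mu (Ik (Suc k)) bfun)"
  then have "esssup mu f < 1" unfolding Linf_norm_def f_def by simp
  have "AE x in mu. f x \<le> esssup mu f" by (rule esssup_AE)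
  then have "AE x in mu. x \<notin> Ikb (Suc (Suc k))"
  proof eventually_elim
    case (elim x)
    show ?case
    proof
      assume "x \<in> Ikb (Suc (Suc k))"
      then have "f x = 1" unfolding f_def by (simp add: mdiff_Ik_bfun_on_Ikb)
      with elim \<open>esssup mu f < 1\<close> show False by simp
    qed
  qed
  then have "emeasure mu (Ikb (Suc (Suc k))) = 0"
    using AE_iff_null_sets[of "Ikb (Suc (Suc k))" mu] by auto
  then show False
    using emeasure_mu_Ikb[of "Suc (Suc k)"] unfolding muIb_Suc_Suc by simp
qed

lemma not_summable_half_harmonic: "\<not> summable (\<lambda>k. 1 / (2 * (real k + 1)))"
proof
  assume "summable (\<lambda>k. 1 / (2 * (real k + 1)))"
  then have "summable (\<lambda>k. 2 * (1 / (2 * (real k + 1))))" by (rule summable_mult)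
  moreover have "(\<lambda>k. 2 * (1 / (2 * (real k + 1)))) = (\<lambda>k. inverse (real (Suc k)))"
    by (auto simp: divide_simps)
  ultimately have "summable (\<lambda>k. inverse (real (Suc k)))" by simp
  then have "summable (\<lambda>n. inverse (real n))" using summable_Suc_iff[of "\<lambda>n. inverse (real n)"] by simp
  then show False using not_summable_harmonic by blast
qed

lemma one_le_ereal_power2: "1 \<le> (a::ereal) \<Longrightarrow> 1 \<le> a\<^sup>2"
  by (cases a) (auto simp: power2_eq_square intro: order_trans[OF _ mult_mono[of 1 _ 1, simplified]])

lemma suminf_Linf_norm_mdiff_Ik_bfun:
  "(\<Sum>k. (Linf_norm mu (mdiff mu (Ik (Suc k)) bfun))\<^sup>2 * ereal (measure mu (Ik (Suc k)))) = \<infinity>"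
proof -
  have "(\<Sum>k. ereal (1 / (2 * (real k + 1)))) = \<infinity>"
  proof (rule ccontr)
    assume "(\<Sum>k. ereal (1 / (2 * (real k + 1)))) \<noteq> \<infinity>"
    then have "summable (\<lambda>k. 1 / (2 * (real k + 1)))" by (rule summable_ereal[rotated]) simp
    with not_summable_half_harmonic show False by contradiction
  qed
  moreover have "ereal (1 / (2 * (real k + 1)))
      \<le> (Linf_norm mu (mdiff mu (Ik (Suc k)) bfun))\<^sup>2 * ereal (measure mu (Ik (Suc k)))" for k
  proof -
    have "ereal (1 / (2 * (real k + 1))) = 1 * ereal (1 / (2 * (real k + 1)))" by simp
    also have "\<dots> \<le> (Linf_norm mu (mdiff mu (Ik (Suc k)) bfun))\<^sup>2 * ereal (1 / (2 * (real k + 1)))"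
      by (rule ereal_mult_right_mono[OF one_le_ereal_power2[OF Linf_norm_mdiff_Ik_bfun_ge_1]]) simp
    finally show ?thesis unfolding measure_mu_Ik_Suc .
  qed
  then have "(\<Sum>k. ereal (1 / (2 * (real k + 1))))
      \<le> (\<Sum>k. (Linf_norm mu (mdiff mu (Ik (Suc k)) bfun))\<^sup>2 * ereal (measure mu (Ik (Suc k))))"
    by (intro suminf_le_pos) simp_all
  ultimately show ?thesis by simp
qed

theorem mainTheorem6:
  shows "in_BMO mu bfun \<and>
    (\<Sum>k. (Linf_norm mu (mdiff mu (Ik (Suc k)) bfun))\<^sup>2 * ereal (measure mu (Ik (Suc k)))) = \<infinity>"
  using in_BMO_bfun suminf_Linf_norm_mdiff_Ik_bfun by simp

end
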